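(* Let $(p_t)_{t\ge0}$ be the laws of the Ornstein--Uhlenbeck process $dX_t=-X_t\,dt+\sqrt2\,dB_t$ started from a norm-subgaussian random vector $X_0=X\sim p$ in $\mathbb{R}^d$. Fix $0<\delta<1$ and take $T_1\ge\log\big(\frac{16}{\delta}d(\|X\|_{\psi_2}+1)\big)$. Then for all $x\in\mathbb{R}^d$ and $i\in\{1,\dots,d\}$, $$\big|-x_i-\partial_i\log p_{T_1}(x)\big|\le\frac{\delta}{2d}(1+\|x\|).$$
   Context: $\|X\|_{\psi_2}:=\inf\{t>0:\mathbb{E}[e^{\|X\|^2/t^2}]\le2\}$; $X$ is norm-subgaussian if this is finite. $p_{T_1}$ denotes the Lebesgue density of the law of $X_{T_1}$. *)

theory Defs
  imports "HOL-Probability.Probability"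
begin

text \<open>The expectation is taken as a
  nonnegative (extended) integral so that it is always defined.\<close>
definition psi2_norm :: "'a measure \<Rightarrow> ('a \<Rightarrow> 'b::real_normed_vector) \<Rightarrow> real" where
  "psi2_norm M X = Inf {t::real. t > 0 \<and>
      (\<integral>\<^sup>+ \<omega>. ennreal (exp ((norm (X \<omega>))\<^sup>2 / t\<^sup>2)) \<partial>M) \<le> 2}"

definition norm_subgaussian :: "'a measure \<Rightarrow> ('a \<Rightarrow> 'b::real_normed_vector) \<Rightarrow> bool" where
  "norm_subgaussian M X \<longleftrightarrow> (\<exists>t>0.
      (\<integral>\<^sup>+ \<omega>. ennreal (exp ((norm (X \<omega>))\<^sup>2 / t\<^sup>2)) \<partial>M) \<le> 2)"

definition gauss_dens :: "real \<Rightarrow> real ^ 'n \<Rightarrow> real" where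
  "gauss_dens s y = (2 * pi * s) powr (- real CARD('n) / 2) * exp (- (norm y)\<^sup>2 / (2 * s))"

text \<open>Lebesgue density of the law p_t of the Ornstein--Uhlenbeck process
  dX_t = -X_t dt + sqrt 2 dB_t at time t > 0, started at X_0 = X.  Since
  X_t = e^{-t} X_0 + sqrt(1 - e^{-2t}) Z with Z ~ N(0,I_d) independent of X_0,
  its (continuous version of the) density is
  p_t(x) = E[ gauss_dens (1 - e^{-2t}) (x - e^{-t} X_0) ].\<close>
definition ou_density :: "'a measure \<Rightarrow> ('a \<Rightarrow> real ^ 'n) \<Rightarrow> real \<Rightarrow> real ^ 'n \<Rightarrow> real" where
  "ou_density M X t x = (\<integral> \<omega>. gauss_dens (1 - exp (-2 * t)) (x - exp (- t) *\<^sub>R X \<omega>) \<partial>M)"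

end

theory Submission
  imports Defs
begin

text \<open>The law of \<open>X\<^sub>T\<close> is the Gaussian mixture \<open>p\<^sub>T(x) = E \<phi>\<^sub>s(x - a X)\<close> with \<open>a = e\<^sup>-\<^sup>T\<close> and
  \<open>s = 1 - a\<^sup>2\<close>. Differentiating under the integral gives Tweedie's formula
  \<open>\<partial>\<^sub>i log p\<^sub>T(x) = (a m\<^sub>i(x) - x\<^sub>i) / s\<close>, where \<open>m(x)\<close> is the mean of \<open>X\<close> under the posterior
  weights \<open>\<phi>\<^sub>s(x - a X)\<close>. Hence \<open>-x\<^sub>i - \<partial>\<^sub>i log p\<^sub>T(x) = (a\<^sup>2 x\<^sub>i - a m\<^sub>i(x)) / s\<close>, and everything reduces
  to \<open>|m(x)| \<le> 4 (1 + |x|) t\<close> for any \<open>t\<close> with \<open>E exp(|X|\<^sup>2/t\<^sup>2) \<le> 2\<close>, where \<open>a t\<close> is small. Jensen's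
  inequality bounds the normalising mass \<open>E \<phi>\<^sub>s(x - a X)\<close> below by \<open>\<phi>\<^sub>s(0) exp(-2 (1 + |x|)\<^sup>2)\<close>; on the
  event \<open>|X| > 2 (1 + |x|) t\<close> the factor \<open>exp(2 (1 + |x|)\<^sup>2)\<close> is paid for by \<open>exp(|X|\<^sup>2/t\<^sup>2)\<close>, whose
  expectation is at most 2.\<close>

lemma has_real_derivative_integral:
  fixes f f' :: "real \<Rightarrow> 'a \<Rightarrow> real"
  assumes "finite_measure M"
    and meas: "\<And>h. f h \<in> borel_measurable M" and meas': "f' x \<in> borel_measurable M"
    and der: "\<And>h \<omega>. \<omega> \<in> space M \<Longrightarrow> ((\<lambda>h. f h \<omega>) has_real_derivative f' h \<omega>) (at h)"
    and bnd: "\<And>h \<omega>. \<omega> \<in> space M \<Longrightarrow> \<bar>f' h \<omega>\<bar> \<le> C"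
    and int: "integrable M (f x)"
  shows "((\<lambda>h. \<integral>\<omega>. f h \<omega> \<partial>M) has_real_derivative (\<integral>\<omega>. f' x \<omega> \<partial>M)) (at x)"
proof -
  interpret finite_measure M by fact
  have lip: "\<bar>f b \<omega> - f a \<omega>\<bar> \<le> C * \<bar>b - a\<bar>" if "\<omega> \<in> space M" for a b \<omega>
    using field_differentiable_bound[of UNIV "\<lambda>h. f h \<omega>" "\<lambda>h. f' h \<omega>" C b a] der bnd that
    by (auto simp: has_field_derivative_at_within)
  have intf: "integrable M (f h)" for h
  proof (rule Bochner_Integration.integrable_bound)
    show "integrable M (\<lambda>\<omega>. \<bar>f x \<omega>\<bar> + C * \<bar>h - x\<bar>)"
      using int by auto
    show "AE \<omega> in M. norm (f h \<omega>) \<le> norm (\<bar>f x \<omega>\<bar> + C * \<bar>h - x\<bar>)"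
    proof (rule AE_I2)
      fix \<omega> assume \<omega>: "\<omega> \<in> space M"
      then have "0 \<le> C" using bnd[OF \<omega>, of 0] by linarith
      then show "norm (f h \<omega>) \<le> norm (\<bar>f x \<omega>\<bar> + C * \<bar>h - x\<bar>)"
        using lip[OF \<omega>, of h x] by simp
    qed
  qed (rule meas)
  show ?thesis unfolding has_field_derivative_iff tendsto_at_iff_sequentially comp_def
  proof (intro allI impI)
    fix S :: "nat \<Rightarrow> real" assume S: "\<forall>n. S n \<in> UNIV - {x}" "S \<longlonglongrightarrow> x"
    have quot: "((\<integral>\<omega>. f (S n) \<omega> \<partial>M) - (\<integral>\<omega>. f x \<omega> \<partial>M)) / (S n - x)
        = (\<integral>\<omega>. (f (S n) \<omega> - f x \<omega>) / (S n - x) \<partial>M)" for n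
      using intf by simp
    show "(\<lambda>n. ((\<integral>\<omega>. f (S n) \<omega> \<partial>M) - (\<integral>\<omega>. f x \<omega> \<partial>M)) / (S n - x)) \<longlonglongrightarrow> (\<integral>\<omega>. f' x \<omega> \<partial>M)"
      unfolding quot
    proof (rule integral_dominated_convergence[where w="\<lambda>_. C"])
      show "AE \<omega> in M. (\<lambda>n. (f (S n) \<omega> - f x \<omega>) / (S n - x)) \<longlonglongrightarrow> f' x \<omega>"
      proof (rule AE_I2)
        fix \<omega> assume "\<omega> \<in> space M"
        then have "((\<lambda>y. (f y \<omega> - f x \<omega>) / (y - x)) \<longlongrightarrow> f' x \<omega>) (at x)"
          using der unfolding has_field_derivative_iff by blast
        then show "(\<lambda>n. (f (S n) \<omega> - f x \<omega>) / (S n - x)) \<longlonglongrightarrow> f' x \<omega>"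
          using S unfolding tendsto_at_iff_sequentially comp_def by blast
      qed
      show "AE \<omega> in M. norm ((f (S n) \<omega> - f x \<omega>) / (S n - x)) \<le> C" for n
        using S lip[of _ "S n" x] by (intro AE_I2) (auto simp: divide_le_eq abs_divide)
    qed (use meas meas' in auto)
  qed
qed

lemma norm_add_axis_squared:
  fixes v :: "real ^ 'n"
  shows "(norm (v + h *\<^sub>R axis i 1))\<^sup>2 = (norm v)\<^sup>2 + 2 * h * v $ i + h\<^sup>2"
  unfolding power2_norm_eq_inner
  by (simp add: inner_axis inner_axis' inner_commute power2_eq_square algebra_simps)

lemma gauss_dens_eq:
  fixes y :: "real ^ 'n"
  shows "gauss_dens s y = gauss_dens s (0 :: real ^ 'n) * exp (- (norm y)\<^sup>2 / (2 * s))"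
  by (simp add: gauss_dens_def)

lemma gauss_dens_pos:
  fixes y :: "real ^ 'n"
  shows "0 < s \<Longrightarrow> 0 < gauss_dens s y"
  by (simp add: gauss_dens_def)

lemma gauss_dens_le:
  fixes y :: "real ^ 'n"
  shows "0 < s \<Longrightarrow> gauss_dens s y \<le> gauss_dens s (0 :: real ^ 'n)"
  by (subst gauss_dens_eq) (simp add: gauss_dens_def)

lemma borel_measurable_gauss_dens [measurable]: "gauss_dens s \<in> borel_measurable borel"
proof -
  have "(\<lambda>y::real ^ 'n. exp (- (norm y)\<^sup>2 / (2 * s))) \<in> borel_measurable borel"
    by measurable
  then show ?thesis
    unfolding gauss_dens_def by measurable
qed

lemma gauss_dens_axis_has_real_derivative:
  fixes v :: "real ^ 'n"
  assumes "0 < s"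
  shows "((\<lambda>h. gauss_dens s (v + h *\<^sub>R axis i 1)) has_real_derivative
           - ((v $ i + h) / s) * gauss_dens s (v + h *\<^sub>R axis i 1)) (at h)"
proof -
  have "((\<lambda>h. - ((norm v)\<^sup>2 + 2 * h * v $ i + h\<^sup>2) / (2 * s)) has_real_derivative - ((v $ i + h) / s)) (at h)"
    using assms by (auto intro!: derivative_eq_intros simp: field_simps)
  from DERIV_cmult[OF DERIV_chain2[OF DERIV_exp this], of "gauss_dens s (0 :: real ^ 'n)"]
  show ?thesis
    by (subst (1 2) gauss_dens_eq) (simp add: norm_add_axis_squared algebra_simps)
qed

lemma abs_mult_exp_neg_square_le:
  fixes r N s :: real
  assumes "r\<^sup>2 \<le> N" "0 < s"
  shows "\<bar>r\<bar> * exp (- N / (2 * s)) \<le> 1 + 2 * s"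
proof -
  define u where "u = r\<^sup>2 / (2 * s)"
  have "\<bar>r\<bar> \<le> 1 + r\<^sup>2"
    using sum_power2_ge_zero[of "\<bar>r\<bar> - 1" 0] by (simp add: power2_diff algebra_simps)
  moreover have "exp (- N / (2 * s)) \<le> exp (- u)"
    unfolding u_def using assms by (simp add: divide_right_mono)
  ultimately have "\<bar>r\<bar> * exp (- N / (2 * s)) \<le> (1 + r\<^sup>2) * exp (- u)"
    by (intro mult_mono) auto
  also have "\<dots> = exp (- u) + r\<^sup>2 * exp (- u)"
    by (simp add: algebra_simps)
  moreover have "r\<^sup>2 * exp (- u) \<le> 2 * s"
    using exp_ge_add_one_self[of u] assms unfolding u_def by (simp add: exp_minus field_simps)
  moreover have "exp (- u) \<le> 1"
    unfolding u_def using assms by simp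
  ultimately show ?thesis by linarith
qed

lemma abs_gauss_dens_score_le:
  fixes v :: "real ^ 'n"
  assumes "0 < s"
  shows "\<bar>v $ i / s * gauss_dens s v\<bar> \<le> gauss_dens s (0 :: real ^ 'n) * (1 + 2 * s) / s"
proof -
  have "(v $ i)\<^sup>2 \<le> (norm v)\<^sup>2"
    using component_le_norm_cart[of v i] by (metis abs_ge_zero power2_abs power_mono)
  from abs_mult_exp_neg_square_le[OF this assms] have
    "gauss_dens s (0 :: real ^ 'n) * (\<bar>v $ i\<bar> * exp (- (norm v)\<^sup>2 / (2 * s)))
      \<le> gauss_dens s (0 :: real ^ 'n) * (1 + 2 * s)"
    by (intro mult_left_mono) (auto simp: gauss_dens_def)
  moreover have "0 < gauss_dens s (0 :: real ^ 'n)"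
    using assms by (simp add: gauss_dens_def)
  ultimately show ?thesis
    using assms by (subst gauss_dens_eq) (simp add: abs_mult divide_right_mono mult.left_commute)
qed

lemma integrable_gauss_dens:
  fixes F :: "'a \<Rightarrow> real ^ 'n"
  assumes "finite_measure M" and "F \<in> borel_measurable M" and s: "0 < s"
  shows "integrable M (\<lambda>\<omega>. gauss_dens s (F \<omega>))"
proof -
  interpret finite_measure M by fact
  have "\<bar>gauss_dens s (F \<omega>)\<bar> \<le> gauss_dens s (0 :: real ^ 'n)" for \<omega>
    unfolding abs_of_pos[OF gauss_dens_pos[OF s]] by (rule gauss_dens_le[OF s])
  then show ?thesis
    using assms(2) by (intro integrable_const_bound[where B="gauss_dens s (0 :: real ^ 'n)"]) auto
qed

lemma has_real_derivative_gauss_mixture: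
  fixes Y :: "'a \<Rightarrow> real ^ 'n" and x :: "real ^ 'n"
  assumes "finite_measure M" and [measurable]: "Y \<in> borel_measurable M" and s: "0 < s"
  shows "((\<lambda>h. \<integral>\<omega>. gauss_dens s (x + h *\<^sub>R axis i 1 - Y \<omega>) \<partial>M) has_real_derivative
           ((\<integral>\<omega>. Y \<omega> $ i * gauss_dens s (x - Y \<omega>) \<partial>M) - x $ i * (\<integral>\<omega>. gauss_dens s (x - Y \<omega>) \<partial>M)) / s)
           (at 0)"
proof -
  interpret finite_measure M by fact
  define g where "g = (\<lambda>\<omega>. gauss_dens s (x - Y \<omega>))"
  define f where "f h \<omega> = gauss_dens s (x - Y \<omega> + h *\<^sub>R axis i 1)" for h \<omega>
  define f' where "f' h \<omega> = - ((x $ i - Y \<omega> $ i + h) / s) * f h \<omega>" for h \<omega>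
  define C where "C = gauss_dens s (0 :: real ^ 'n) * (1 + 2 * s) / s"
  have [measurable]: "(\<lambda>\<omega>. Y \<omega> $ i) \<in> borel_measurable M"
    by (rule measurable_compose[OF _ borel_measurable_nth]) simp
  have [measurable]: "g \<in> borel_measurable M" "f h \<in> borel_measurable M" "f' h \<in> borel_measurable M" for h
    unfolding g_def f_def f'_def by measurable
  have f'_bound: "\<bar>f' h \<omega>\<bar> \<le> C" for h \<omega>
    using abs_gauss_dens_score_le[OF s, of "x - Y \<omega> + h *\<^sub>R axis i 1" i]
    by (simp add: f'_def f_def C_def)
  have g_int: "integrable M g"
    unfolding g_def by (rule integrable_gauss_dens[OF finite_measure_axioms _ s]) simp
  have f'_int: "integrable M (f' 0)"
    using f'_bound by (intro integrable_const_bound[where B=C]) auto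
  have f0: "f 0 = g"
    by (simp add: f_def g_def fun_eq_iff)
  have f'0: "f' 0 \<omega> = (Y \<omega> $ i * g \<omega> - x $ i * g \<omega>) / s" for \<omega>
    using s by (simp add: f'_def f_def g_def field_simps)
  have "integrable M (\<lambda>\<omega>. x $ i * g \<omega> + s * f' 0 \<omega>)"
    using g_int f'_int by auto
  moreover have "x $ i * g \<omega> + s * f' 0 \<omega> = Y \<omega> $ i * g \<omega>" for \<omega>
    using s by (simp add: f'0)
  ultimately have Yg_int: "integrable M (\<lambda>\<omega>. Y \<omega> $ i * g \<omega>)"
    by simp
  have "((\<lambda>h. \<integral>\<omega>. f h \<omega> \<partial>M) has_real_derivative (\<integral>\<omega>. f' 0 \<omega> \<partial>M)) (at 0)"
  proof (rule has_real_derivative_integral[where C=C])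
    show "((\<lambda>h. f h \<omega>) has_real_derivative f' h \<omega>) (at h)" for h \<omega>
      using gauss_dens_axis_has_real_derivative[OF s, of "x - Y \<omega>" i h] by (simp add: f_def f'_def)
    show "integrable M (f 0)"
      using g_int by (simp add: f0)
  qed (use f'_bound finite_measure_axioms in auto)
  moreover have "(\<integral>\<omega>. f' 0 \<omega> \<partial>M) = ((\<integral>\<omega>. Y \<omega> $ i * g \<omega> \<partial>M) - x $ i * (\<integral>\<omega>. g \<omega> \<partial>M)) / s"
    unfolding f'0 using g_int Yg_int by simp
  moreover have "f h \<omega> = gauss_dens s (x + h *\<^sub>R axis i 1 - Y \<omega>)" for h \<omega>
    by (simp add: f_def algebra_simps)
  ultimately show ?thesis
    by (simp add: g_def)
qed

lemma (in prob_space) integral_pos: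
  fixes f :: "'a \<Rightarrow> real"
  assumes "integrable M f" and pos: "\<And>\<omega>. \<omega> \<in> space M \<Longrightarrow> 0 < f \<omega>"
  shows "0 < (\<integral>\<omega>. f \<omega> \<partial>M)"
proof -
  have "\<not> (AE \<omega> in M. f \<omega> = 0)"
    using pos by (simp add: less_imp_neq[symmetric])
  then have "(\<integral>\<omega>. f \<omega> \<partial>M) \<noteq> 0"
    using integral_nonneg_eq_0_iff_AE[OF assms(1)] pos by (simp add: less_imp_le)
  moreover have "0 \<le> (\<integral>\<omega>. f \<omega> \<partial>M)"
    using pos by (simp add: less_imp_le)
  ultimately show ?thesis by simp
qed

lemma has_real_derivative_ln_gauss_mixture:
  fixes Y :: "'a \<Rightarrow> real ^ 'n" and x :: "real ^ 'n"
  assumes "prob_space M" and Y: "Y \<in> borel_measurable M" and s: "0 < s"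
  defines "W \<equiv> \<integral>\<omega>. gauss_dens s (x - Y \<omega>) \<partial>M"
  shows "((\<lambda>h. ln (\<integral>\<omega>. gauss_dens s (x + h *\<^sub>R axis i 1 - Y \<omega>) \<partial>M)) has_real_derivative
           ((\<integral>\<omega>. Y \<omega> $ i * gauss_dens s (x - Y \<omega>) \<partial>M) / W - x $ i) / s) (at 0)"
proof -
  interpret prob_space M by fact
  have "0 < W"
    unfolding W_def
    using integrable_gauss_dens[OF finite_measure_axioms _ s] Y gauss_dens_pos[OF s]
    by (intro integral_pos) auto
  then have "0 < (\<integral>\<omega>. gauss_dens s (x + 0 *\<^sub>R axis i 1 - Y \<omega>) \<partial>M)"
    by (simp add: W_def)
  from DERIV_chain2[OF DERIV_ln_divide[OF this] has_real_derivative_gauss_mixture[OF finite_measure_axioms Y s]]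
  show ?thesis
    using \<open>0 < W\<close> by (simp add: W_def field_simps)
qed

lemma psi2_norm_nonneg:
  assumes "norm_subgaussian M X"
  shows "0 \<le> psi2_norm M X"
  using assms unfolding norm_subgaussian_def psi2_norm_def by (intro cInf_greatest) auto

lemma psi2_norm_less_obtains:
  assumes "norm_subgaussian M X" and "psi2_norm M X < u"
  obtains t where "0 < t" "t < u" "(\<integral>\<^sup>+ \<omega>. ennreal (exp ((norm (X \<omega>))\<^sup>2 / t\<^sup>2)) \<partial>M) \<le> 2"
  using assms cInf_lessD[of "{t. t > 0 \<and> (\<integral>\<^sup>+ \<omega>. ennreal (exp ((norm (X \<omega>))\<^sup>2 / t\<^sup>2)) \<partial>M) \<le> 2}" u]
  unfolding norm_subgaussian_def psi2_norm_def by auto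

lemma le_exp_square_tail:
  fixes u t y :: real
  assumes t: "0 < t" and y: "0 \<le> y" and u: "2 * y * t < u"
  shows "u \<le> t * (exp (- 2 * y\<^sup>2) * exp (u\<^sup>2 / t\<^sup>2))"
proof -
  define v where "v = u / t"
  have "2 * y < v"
    using u t by (simp add: v_def field_simps)
  then have "(2 * y)\<^sup>2 \<le> v\<^sup>2"
    using y by (intro power_mono) auto
  then have "v\<^sup>2 / 2 \<le> v\<^sup>2 - 2 * y\<^sup>2"
    by (simp add: power_mult_distrib)
  have "v \<le> 1 + v\<^sup>2 / 2"
    using sum_power2_ge_zero[of "v - 1" 0] by (simp add: power2_diff algebra_simps)
  also have "\<dots> \<le> exp (v\<^sup>2 / 2)"
    by (rule exp_ge_add_one_self)
  also have "\<dots> \<le> exp (v\<^sup>2 - 2 * y\<^sup>2)"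
    using \<open>v\<^sup>2 / 2 \<le> v\<^sup>2 - 2 * y\<^sup>2\<close> by simp
  also have "\<dots> = exp (- 2 * y\<^sup>2) * exp (u\<^sup>2 / t\<^sup>2)"
    by (simp add: v_def power_divide flip: exp_add)
  finally show ?thesis
    using t by (simp add: v_def divide_le_eq mult.commute)
qed

lemma mult_le_linear_plus_exp_square_tail:
  fixes u w c t y :: real
  assumes t: "0 < t" and y: "0 \<le> y" and w: "0 \<le> w" "w \<le> c"
  shows "u * w \<le> 2 * y * t * w + t * (c * exp (- 2 * y\<^sup>2)) * exp (u\<^sup>2 / t\<^sup>2)"
proof (cases "u \<le> 2 * y * t")
  case True
  then have "u * w \<le> 2 * y * t * w"
    using w by (intro mult_right_mono) auto
  moreover have "0 \<le> t * (c * exp (- 2 * y\<^sup>2)) * exp (u\<^sup>2 / t\<^sup>2)"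
    using t w by simp
  ultimately show ?thesis by linarith
next
  case False
  have "0 \<le> 2 * y * t"
    using t y by simp
  then have "0 \<le> u"
    using False by linarith
  then have "u * w \<le> u * c"
    using w by (intro mult_left_mono)
  also have "\<dots> \<le> t * (exp (- 2 * y\<^sup>2) * exp (u\<^sup>2 / t\<^sup>2)) * c"
    using False t y w by (intro mult_right_mono le_exp_square_tail) auto
  finally have "u * w \<le> t * (c * exp (- 2 * y\<^sup>2)) * exp (u\<^sup>2 / t\<^sup>2)"
    by (simp add: mult_ac)
  moreover have "0 \<le> 2 * y * t * w"
    using \<open>0 \<le> 2 * y * t\<close> w by simp
  ultimately show ?thesis
    by linarith
qed

context prob_space
begin

lemma exp_square_norm_integrable:
  fixes X :: "'a \<Rightarrow> 'b::real_normed_vector"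
  assumes [measurable]: "X \<in> borel_measurable M"
    and E: "(\<integral>\<^sup>+ \<omega>. ennreal (exp ((norm (X \<omega>))\<^sup>2 / t\<^sup>2)) \<partial>M) \<le> 2"
  shows "integrable M (\<lambda>\<omega>. exp ((norm (X \<omega>))\<^sup>2 / t\<^sup>2))"
    and "(\<integral>\<omega>. exp ((norm (X \<omega>))\<^sup>2 / t\<^sup>2) \<partial>M) \<le> 2"
proof -
  show int: "integrable M (\<lambda>\<omega>. exp ((norm (X \<omega>))\<^sup>2 / t\<^sup>2))"
    using E by (intro integrableI_nonneg) (auto simp: order_le_less_trans[OF _ ennreal_numeral_less_top])
  have "ennreal (\<integral>\<omega>. exp ((norm (X \<omega>))\<^sup>2 / t\<^sup>2) \<partial>M) \<le> 2"
    using E int by (subst nn_integral_eq_integral[symmetric]) auto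
  then show "(\<integral>\<omega>. exp ((norm (X \<omega>))\<^sup>2 / t\<^sup>2) \<partial>M) \<le> 2"
    by (metis ennreal_le_iff ennreal_numeral zero_le_numeral)
qed

lemma subgaussian_second_moment:
  fixes X :: "'a \<Rightarrow> 'b::real_normed_vector"
  assumes [measurable]: "X \<in> borel_measurable M" and t: "0 < t"
    and E: "(\<integral>\<^sup>+ \<omega>. ennreal (exp ((norm (X \<omega>))\<^sup>2 / t\<^sup>2)) \<partial>M) \<le> 2"
  shows "integrable M (\<lambda>\<omega>. (norm (X \<omega>))\<^sup>2)" and "(\<integral>\<omega>. (norm (X \<omega>))\<^sup>2 \<partial>M) \<le> 2 * t\<^sup>2"
proof -
  note E_int = exp_square_norm_integrable[OF assms(1) E]
  have le: "(norm (X \<omega>))\<^sup>2 \<le> t\<^sup>2 * exp ((norm (X \<omega>))\<^sup>2 / t\<^sup>2)" for \<omega>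
  proof -
    have "(norm (X \<omega>))\<^sup>2 / t\<^sup>2 \<le> exp ((norm (X \<omega>))\<^sup>2 / t\<^sup>2)"
      using exp_ge_add_one_self[of "(norm (X \<omega>))\<^sup>2 / t\<^sup>2"] by linarith
    then show ?thesis
      using t by (simp add: divide_le_eq mult.commute)
  qed
  show int: "integrable M (\<lambda>\<omega>. (norm (X \<omega>))\<^sup>2)"
  proof (rule Bochner_Integration.integrable_bound[OF integrable_mult_right[OF E_int(1), of "t\<^sup>2"]])
    show "AE \<omega> in M. norm ((norm (X \<omega>))\<^sup>2) \<le> norm (t\<^sup>2 * exp ((norm (X \<omega>))\<^sup>2 / t\<^sup>2))"
      using le by (intro AE_I2) simp
  qed measurable
  have "(\<integral>\<omega>. (norm (X \<omega>))\<^sup>2 \<partial>M) \<le> (\<integral>\<omega>. t\<^sup>2 * exp ((norm (X \<omega>))\<^sup>2 / t\<^sup>2) \<partial>M)"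
    using le by (intro integral_mono int integrable_mult_right E_int(1))
  also have "\<dots> \<le> t\<^sup>2 * 2"
    using E_int(2) by (simp add: mult_left_mono)
  finally show "(\<integral>\<omega>. (norm (X \<omega>))\<^sup>2 \<partial>M) \<le> 2 * t\<^sup>2"
    by simp
qed

lemma shifted_second_moment:
  fixes X :: "'a \<Rightarrow> 'b::{second_countable_topology, real_normed_vector}"
  assumes [measurable]: "X \<in> borel_measurable M" and t: "0 < t"
    and E: "(\<integral>\<^sup>+ \<omega>. ennreal (exp ((norm (X \<omega>))\<^sup>2 / t\<^sup>2)) \<partial>M) \<le> 2"
    and a: "0 \<le> a" "a * t \<le> 1/2"
  shows "integrable M (\<lambda>\<omega>. (norm (x - a *\<^sub>R X \<omega>))\<^sup>2)"
    and "(\<integral>\<omega>. (norm (x - a *\<^sub>R X \<omega>))\<^sup>2 \<partial>M) \<le> 2 * (1 + norm x)\<^sup>2"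
proof -
  note X2 = subgaussian_second_moment[OF assms(1-3)]
  have le: "(norm (x - a *\<^sub>R X \<omega>))\<^sup>2 \<le> 2 * (norm x)\<^sup>2 + 2 * a\<^sup>2 * (norm (X \<omega>))\<^sup>2" for \<omega>
  proof -
    have "norm (x - a *\<^sub>R X \<omega>) \<le> norm x + a * norm (X \<omega>)"
      using norm_triangle_ineq4[of x "a *\<^sub>R X \<omega>"] a by simp
    then have "(norm (x - a *\<^sub>R X \<omega>))\<^sup>2 \<le> (norm x + a * norm (X \<omega>))\<^sup>2"
      by (intro power_mono) auto
    also have "\<dots> \<le> 2 * (norm x)\<^sup>2 + 2 * a\<^sup>2 * (norm (X \<omega>))\<^sup>2"
      using sum_power2_ge_zero[of "norm x - a * norm (X \<omega>)" 0]
      by (simp add: power2_eq_square algebra_simps)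
    finally show ?thesis .
  qed
  have bound_int: "integrable M (\<lambda>\<omega>. 2 * (norm x)\<^sup>2 + 2 * a\<^sup>2 * (norm (X \<omega>))\<^sup>2)"
    using X2(1) by simp
  show int: "integrable M (\<lambda>\<omega>. (norm (x - a *\<^sub>R X \<omega>))\<^sup>2)"
  proof (rule Bochner_Integration.integrable_bound[OF bound_int])
    show "AE \<omega> in M. norm ((norm (x - a *\<^sub>R X \<omega>))\<^sup>2) \<le> norm (2 * (norm x)\<^sup>2 + 2 * a\<^sup>2 * (norm (X \<omega>))\<^sup>2)"
      using le by (intro AE_I2) (auto intro: order_trans[OF _ abs_ge_self])
  qed measurable
  have "(\<integral>\<omega>. (norm (x - a *\<^sub>R X \<omega>))\<^sup>2 \<partial>M) \<le> (\<integral>\<omega>. 2 * (norm x)\<^sup>2 + 2 * a\<^sup>2 * (norm (X \<omega>))\<^sup>2 \<partial>M)"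
    using le by (intro integral_mono int bound_int)
  also have "\<dots> = 2 * (norm x)\<^sup>2 + 2 * a\<^sup>2 * (\<integral>\<omega>. (norm (X \<omega>))\<^sup>2 \<partial>M)"
    using X2(1) by (simp add: prob_space)
  also have "\<dots> \<le> 2 * (norm x)\<^sup>2 + 4 * (a * t)\<^sup>2"
    using mult_left_mono[OF X2(2), of "2 * a\<^sup>2"] by (simp add: power_mult_distrib)
  also have "\<dots> \<le> 2 * (1 + norm x)\<^sup>2"
  proof -
    have "(a * t)\<^sup>2 \<le> (1/2)\<^sup>2"
      using a t by (intro power_mono) auto
    moreover have "2 * (norm x)\<^sup>2 + 1 \<le> 2 * (1 + norm x)\<^sup>2"
      using norm_ge_zero[of x] by (simp add: power2_eq_square algebra_simps)
    ultimately show ?thesis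
      by (simp add: power_divide)
  qed
  finally show "(\<integral>\<omega>. (norm (x - a *\<^sub>R X \<omega>))\<^sup>2 \<partial>M) \<le> 2 * (1 + norm x)\<^sup>2" .
qed

lemma gauss_mixture_mass_lower_bound:
  fixes X :: "'a \<Rightarrow> real ^ 'n"
  assumes [measurable]: "X \<in> borel_measurable M" and t: "0 < t"
    and E: "(\<integral>\<^sup>+ \<omega>. ennreal (exp ((norm (X \<omega>))\<^sup>2 / t\<^sup>2)) \<partial>M) \<le> 2"
    and a: "0 \<le> a" "a * t \<le> 1/2" and s: "1/2 \<le> s"
  shows "gauss_dens s (0 :: real ^ 'n) * exp (- 2 * (1 + norm x)\<^sup>2)
           \<le> (\<integral>\<omega>. gauss_dens s (x - a *\<^sub>R X \<omega>) \<partial>M)"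
proof -
  define Q where "Q \<omega> = (norm (x - a *\<^sub>R X \<omega>))\<^sup>2" for \<omega>
  note Q = shifted_second_moment[OF assms(1-5), of x, folded Q_def]
  have Q_nonneg: "0 \<le> expectation Q"
    by (simp add: Q_def)
  have "- 2 * (1 + norm x)\<^sup>2 \<le> - expectation Q"
    using Q(2) by simp
  also have "\<dots> \<le> - expectation Q / (2 * s)"
  proof -
    have "1 * expectation Q \<le> (2 * s) * expectation Q"
      using s Q_nonneg by (intro mult_right_mono) auto
    then show ?thesis
      using s by (simp add: divide_le_eq mult_ac)
  qed
  also have "\<dots> = expectation (\<lambda>\<omega>. - Q \<omega> / (2 * s))"
    by simp
  finally have "exp (- 2 * (1 + norm x)\<^sup>2) \<le> exp (expectation (\<lambda>\<omega>. - Q \<omega> / (2 * s)))"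
    by simp
  also have "\<dots> \<le> expectation (\<lambda>\<omega>. exp (- Q \<omega> / (2 * s)))"
  proof (rule jensens_inequality[where I=UNIV])
    show "integrable M (\<lambda>\<omega>. exp (- Q \<omega> / (2 * s)))"
      using s by (intro integrable_const_bound[where B=1]) (auto simp: Q_def)
  qed (use Q(1) convex_on_exp[of 1] in auto)
  finally show ?thesis
    using gauss_dens_pos[of s "0 :: real ^ 'n"] s
    by (subst gauss_dens_eq) (simp add: Q_def mult_left_mono)
qed

lemma gauss_mixture_posterior_norm_bound:
  fixes X :: "'a \<Rightarrow> real ^ 'n" and x :: "real ^ 'n"
  assumes [measurable]: "X \<in> borel_measurable M" and t: "0 < t"
    and E: "(\<integral>\<^sup>+ \<omega>. ennreal (exp ((norm (X \<omega>))\<^sup>2 / t\<^sup>2)) \<partial>M) \<le> 2"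
    and a: "0 \<le> a" "a * t \<le> 1/2" and s: "1/2 \<le> s"
  defines "g \<equiv> \<lambda>\<omega>. gauss_dens s (x - a *\<^sub>R X \<omega>)"
  shows "integrable M (\<lambda>\<omega>. norm (X \<omega>) * g \<omega>)"
    and "(\<integral>\<omega>. norm (X \<omega>) * g \<omega> \<partial>M) \<le> 4 * (1 + norm x) * t * (\<integral>\<omega>. g \<omega> \<partial>M)"
proof -
  define y where "y = 1 + norm x"
  define c where "c = gauss_dens s (0 :: real ^ 'n)"
  define E where "E \<omega> = exp ((norm (X \<omega>))\<^sup>2 / t\<^sup>2)" for \<omega>
  note E_int = exp_square_norm_integrable[OF assms(1) E, folded E_def]
  have s0: "0 < s"
    using s by simp
  have g: "0 \<le> g \<omega>" "g \<omega> \<le> c" for \<omega>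
    unfolding g_def c_def using gauss_dens_pos[OF s0] gauss_dens_le[OF s0] by (auto intro: less_imp_le)
  have c_nonneg: "0 \<le> c"
    unfolding c_def using gauss_dens_pos[OF s0] by (rule less_imp_le)
  have g_int: "integrable M g"
    unfolding g_def by (rule integrable_gauss_dens[OF finite_measure_axioms _ s0]) simp
  have W_nonneg: "0 \<le> (\<integral>\<omega>. g \<omega> \<partial>M)"
    by (simp add: g)
  have mass: "c * exp (- 2 * y\<^sup>2) \<le> (\<integral>\<omega>. g \<omega> \<partial>M)"
    unfolding c_def y_def g_def by (rule gauss_mixture_mass_lower_bound[OF assms(1-6)])
  have split: "norm (X \<omega>) * g \<omega> \<le> 2 * y * t * g \<omega> + t * (c * exp (- 2 * y\<^sup>2)) * E \<omega>" for \<omega>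
    unfolding E_def by (rule mult_le_linear_plus_exp_square_tail[OF t _ g]) (simp add: y_def)
  have bound_int: "integrable M (\<lambda>\<omega>. 2 * y * t * g \<omega> + t * (c * exp (- 2 * y\<^sup>2)) * E \<omega>)"
    using g_int E_int(1) by auto
  show int: "integrable M (\<lambda>\<omega>. norm (X \<omega>) * g \<omega>)"
  proof (rule Bochner_Integration.integrable_bound[OF bound_int])
    show "AE \<omega> in M. norm (norm (X \<omega>) * g \<omega>)
        \<le> norm (2 * y * t * g \<omega> + t * (c * exp (- 2 * y\<^sup>2)) * E \<omega>)"
      using split g by (intro AE_I2) (auto simp: abs_mult intro: order_trans[OF _ abs_ge_self])
  qed (unfold g_def, measurable)
  have "(\<integral>\<omega>. norm (X \<omega>) * g \<omega> \<partial>M)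
      \<le> (\<integral>\<omega>. 2 * y * t * g \<omega> + t * (c * exp (- 2 * y\<^sup>2)) * E \<omega> \<partial>M)"
    using split by (intro integral_mono int bound_int)
  also have "\<dots> = 2 * y * t * (\<integral>\<omega>. g \<omega> \<partial>M) + t * (c * exp (- 2 * y\<^sup>2)) * (\<integral>\<omega>. E \<omega> \<partial>M)"
    using g_int E_int(1) by simp
  also have "\<dots> \<le> 2 * y * t * (\<integral>\<omega>. g \<omega> \<partial>M) + t * (\<integral>\<omega>. g \<omega> \<partial>M) * 2"
    using E_int(2) mass t c_nonneg W_nonneg by (intro add_left_mono mult_mono) (auto simp: E_def)
  also have "\<dots> \<le> 4 * y * t * (\<integral>\<omega>. g \<omega> \<partial>M)"
    using t W_nonneg by (simp add: y_def algebra_simps)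
  finally show "(\<integral>\<omega>. norm (X \<omega>) * g \<omega> \<partial>M) \<le> 4 * (1 + norm x) * t * (\<integral>\<omega>. g \<omega> \<partial>M)"
    unfolding y_def .
qed

lemma gauss_mixture_posterior_mean_bound:
  fixes X :: "'a \<Rightarrow> real ^ 'n" and x :: "real ^ 'n"
  assumes [measurable]: "X \<in> borel_measurable M" and t: "0 < t"
    and E: "(\<integral>\<^sup>+ \<omega>. ennreal (exp ((norm (X \<omega>))\<^sup>2 / t\<^sup>2)) \<partial>M) \<le> 2"
    and a: "0 \<le> a" "a * t \<le> 1/2" and s: "1/2 \<le> s"
  shows "\<bar>(\<integral>\<omega>. X \<omega> $ i * gauss_dens s (x - a *\<^sub>R X \<omega>) \<partial>M)
           / (\<integral>\<omega>. gauss_dens s (x - a *\<^sub>R X \<omega>) \<partial>M)\<bar> \<le> 4 * (1 + norm x) * t"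
proof -
  define g where "g \<omega> = gauss_dens s (x - a *\<^sub>R X \<omega>)" for \<omega>
  note post = gauss_mixture_posterior_norm_bound[OF assms, of x, folded g_def]
  have [measurable]: "(\<lambda>\<omega>. X \<omega> $ i) \<in> borel_measurable M"
    by (rule measurable_compose[OF _ borel_measurable_nth]) simp
  have s0: "0 < s"
    using s by simp
  have g_nonneg: "0 \<le> g \<omega>" for \<omega>
    unfolding g_def using s0 by (intro less_imp_le gauss_dens_pos)
  have comp_le: "\<bar>X \<omega> $ i * g \<omega>\<bar> \<le> norm (X \<omega>) * g \<omega>" for \<omega>
    using g_nonneg[of \<omega>] by (simp add: abs_mult mult_right_mono component_le_norm_cart)
  have comp_int: "integrable M (\<lambda>\<omega>. X \<omega> $ i * g \<omega>)"
  proof (rule Bochner_Integration.integrable_bound[OF post(1)])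
    show "AE \<omega> in M. norm (X \<omega> $ i * g \<omega>) \<le> norm (norm (X \<omega>) * g \<omega>)"
      using comp_le g_nonneg by (intro AE_I2) (simp add: abs_mult)
  qed (unfold g_def, measurable)
  have W_pos: "0 < (\<integral>\<omega>. g \<omega> \<partial>M)"
    using integrable_gauss_dens[OF finite_measure_axioms _ s0, of "\<lambda>\<omega>. x - a *\<^sub>R X \<omega>"] gauss_dens_pos[OF s0]
    unfolding g_def by (intro integral_pos) auto
  have "\<bar>\<integral>\<omega>. X \<omega> $ i * g \<omega> \<partial>M\<bar> \<le> (\<integral>\<omega>. \<bar>X \<omega> $ i * g \<omega>\<bar> \<partial>M)"
    by (rule integral_abs_bound)
  also have "\<dots> \<le> (\<integral>\<omega>. norm (X \<omega>) * g \<omega> \<partial>M)"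
    using comp_le by (intro integral_mono post(1) integrable_abs comp_int)
  also have "\<dots> \<le> 4 * (1 + norm x) * t * (\<integral>\<omega>. g \<omega> \<partial>M)"
    by (rule post(2))
  finally show ?thesis
    using W_pos by (simp add: g_def abs_divide divide_le_eq)
qed

end

lemma exp_neg_time_bounds:
  fixes \<delta> d \<psi> t T :: real
  assumes \<delta>: "0 < \<delta>" "\<delta> < 1" and d: "1 \<le> d" and \<psi>: "0 \<le> \<psi>" and t: "0 < t" "t < \<psi> + 1"
    and T: "ln (16 / \<delta> * d * (\<psi> + 1)) \<le> T"
  defines "\<epsilon> \<equiv> \<delta> / (16 * d)"
  shows "exp (- T) \<le> \<epsilon>" "exp (- T) * t \<le> \<epsilon>" "\<epsilon> \<le> 1/16"
proof -
  have "\<delta> \<le> d"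
    using \<delta> d by linarith
  then have \<epsilon>: "0 < \<epsilon>" "\<epsilon> \<le> 1/16"
    using \<delta> d by (auto simp: \<epsilon>_def field_simps)
  have "(\<psi> + 1) / \<epsilon> = exp (ln ((\<psi> + 1) / \<epsilon>))"
    using \<psi> \<epsilon> by simp
  also have "\<dots> \<le> exp T"
    using T \<delta> d by (simp add: \<epsilon>_def field_simps)
  finally have scale: "exp (- T) * (\<psi> + 1) \<le> \<epsilon>"
    using \<epsilon> by (simp add: exp_minus field_simps)
  have "exp (- T) * t \<le> exp (- T) * (\<psi> + 1)" "exp (- T) * 1 \<le> exp (- T) * (\<psi> + 1)"
    using t \<psi> by (intro mult_left_mono; simp)+
  then show "exp (- T) \<le> \<epsilon>" "exp (- T) * t \<le> \<epsilon>" "\<epsilon> \<le> 1/16"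
    using scale \<epsilon> by linarith+
qed

lemma ou_score_error_le:
  fixes a m \<xi> n \<epsilon> t :: real
  assumes a: "0 \<le> a" "a \<le> \<epsilon>" "a * t \<le> \<epsilon>" and \<epsilon>: "\<epsilon> \<le> 1/16"
    and m: "\<bar>m\<bar> \<le> 4 * (1 + n) * t" and \<xi>: "\<bar>\<xi>\<bar> \<le> n"
  shows "\<bar>- \<xi> - (a * m - \<xi>) / (1 - a\<^sup>2)\<bar> \<le> 8 * \<epsilon> * (1 + n)"
proof -
  have n: "0 \<le> n"
    using \<xi> by linarith
  have "a * a \<le> a * (1/16)"
    using a \<epsilon> by (intro mult_left_mono) auto
  then have "a\<^sup>2 \<le> a / 16"
    by (simp add: power2_eq_square)
  then have a2: "a\<^sup>2 \<le> \<epsilon> / 16" and s: "15/16 \<le> 1 - a\<^sup>2"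
    using a \<epsilon> by linarith+
  have "\<bar>a\<^sup>2 * \<xi> - a * m\<bar> \<le> a\<^sup>2 * n + a * (4 * (1 + n) * t)"
    using abs_triangle_ineq4[of "a\<^sup>2 * \<xi>" "a * m"] mult_left_mono[OF \<xi>, of "a\<^sup>2"]
      mult_left_mono[OF m a(1)]
    by (simp add: abs_mult abs_of_nonneg[OF a(1)])
  also have "\<dots> = a\<^sup>2 * n + 4 * (1 + n) * (a * t)"
    by (simp add: algebra_simps)
  also have "\<dots> \<le> \<epsilon> / 16 * (1 + n) + 4 * (1 + n) * \<epsilon>"
    using a2 a n by (intro add_mono mult_left_mono mult_mono) auto
  also have "\<dots> = 65/16 * (\<epsilon> * (1 + n))"
    by (simp add: algebra_simps)
  also have "\<dots> \<le> 8 * \<epsilon> * (1 + n) * (1 - a\<^sup>2)"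
    using mult_right_mono[of "65/16" "8 * (1 - a\<^sup>2)" "\<epsilon> * (1 + n)"] s a n
    by (simp add: algebra_simps)
  finally have "\<bar>a\<^sup>2 * \<xi> - a * m\<bar> / (1 - a\<^sup>2) \<le> 8 * \<epsilon> * (1 + n)"
    using s by (simp add: pos_divide_le_eq)
  moreover have "- \<xi> - (a * m - \<xi>) / (1 - a\<^sup>2) = (a\<^sup>2 * \<xi> - a * m) / (1 - a\<^sup>2)"
    using s by (simp add: field_simps)
  ultimately show ?thesis
    using s by (simp add: abs_divide)
qed

theorem lemma12:
  fixes M :: "'a measure" and X :: "'a \<Rightarrow> real ^ 'n" and \<delta> T1 :: real
  assumes "prob_space M"
    and "X \<in> borel_measurable M"
    and "norm_subgaussian M X"
    and "0 < \<delta>" and "\<delta> < 1"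
    and "T1 \<ge> ln (16 / \<delta> * real CARD('n) * (psi2_norm M X + 1))"
  shows "\<forall>(x::real ^ 'n) (i::'n). \<exists>D.
           ((\<lambda>h. ln (ou_density M X T1 (x + h *\<^sub>R axis i 1))) has_real_derivative D) (at 0)
           \<and> \<bar>- (x $ i) - D\<bar> \<le> \<delta> / (2 * real CARD('n)) * (1 + norm x)"
proof (intro allI)
  fix x :: "real ^ 'n" and i :: 'n
  interpret prob_space M by fact
  define \<epsilon> where "\<epsilon> = \<delta> / (16 * real CARD('n))"
  define a where "a = exp (- T1)"
  define g where "g \<omega> = gauss_dens (1 - a\<^sup>2) (x - a *\<^sub>R X \<omega>)" for \<omega>
  define m where "m = (\<integral>\<omega>. X \<omega> $ i * g \<omega> \<partial>M) / (\<integral>\<omega>. g \<omega> \<partial>M)"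
  obtain t where t: "0 < t" "t < psi2_norm M X + 1"
    and E: "(\<integral>\<^sup>+ \<omega>. ennreal (exp ((norm (X \<omega>))\<^sup>2 / t\<^sup>2)) \<partial>M) \<le> 2"
    using psi2_norm_less_obtains[OF assms(3), of "psi2_norm M X + 1"] by auto
  have "1 \<le> real CARD('n)"
    using zero_less_card_finite[where 'a='n] by linarith
  from exp_neg_time_bounds[OF assms(4,5) this psi2_norm_nonneg[OF assms(3)] t assms(6)]
  have a: "0 \<le> a" "a \<le> \<epsilon>" "a * t \<le> \<epsilon>" and \<epsilon>: "\<epsilon> \<le> 1/16"
    by (simp_all add: a_def \<epsilon>_def)
  have "a \<le> 1/16"
    using a \<epsilon> by linarith
  then have s: "1/2 \<le> 1 - a\<^sup>2"
    using power_mono[of a "1/16" 2] a by (simp add: power2_eq_square)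
  then have s0: "0 < 1 - a\<^sup>2"
    by linarith
  have aX [measurable]: "(\<lambda>\<omega>. a *\<^sub>R X \<omega>) \<in> borel_measurable M"
    using assms(2) by measurable
  have "((\<lambda>h. ln (ou_density M X T1 (x + h *\<^sub>R axis i 1))) has_real_derivative
          (a * m - x $ i) / (1 - a\<^sup>2)) (at 0)"
    using has_real_derivative_ln_gauss_mixture[OF assms(1) aX s0, where x=x and i=i]
    by (simp add: ou_density_def m_def g_def a_def power2_eq_square mult.assoc flip: exp_add)
  moreover have "\<bar>m\<bar> \<le> 4 * (1 + norm x) * t"
    unfolding m_def g_def using gauss_mixture_posterior_mean_bound[OF assms(2) t(1) E a(1) _ s] a \<epsilon> by simp
  then have "\<bar>- x $ i - (a * m - x $ i) / (1 - a\<^sup>2)\<bar> \<le> \<delta> / (2 * real CARD('n)) * (1 + norm x)"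
    using ou_score_error_le[OF a \<epsilon> _ component_le_norm_cart] by (simp add: \<epsilon>_def)
  ultimately show "\<exists>D. ((\<lambda>h. ln (ou_density M X T1 (x + h *\<^sub>R axis i 1))) has_real_derivative D) (at 0)
      \<and> \<bar>- (x $ i) - D\<bar> \<le> \<delta> / (2 * real CARD('n)) * (1 + norm x)"
    by blast
qed

end
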